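(* Let $L$ be a differential graded Lie algebra with differential $\delta$ (degree $-1$) and bracket $[\cdot,\cdot]$ (degree $0$), and let $D$ be the operator equal to $\delta$ on $L_1$ and zero on $L_i$, $i\ne1$. Fix $n$ and homogeneous elements $a_0,\dots,a_n\in L$. For $j,k\ge0$ with $j+k<n$ define $$Z_{n,j,k}=\sum_{\pi\in S_{n+1}}(-1)^{\varepsilon+|a_{\pi_1}|+\dots+|a_{\pi_j}|}\,\Big[\dots\Big[\big[\dots[Da_{\pi_0},a_{\pi_1}],\dots,a_{\pi_j}\big],\big[\dots[Da_{\pi_{j+1}},a_{\pi_{j+2}}],\dots,a_{\pi_{j+k+1}}\big]\Big],a_{\pi_{j+k+2}}\Big],\dots,a_{\pi_n}\Big],$$ i.e. the left-nested bracket of $Da_{\pi_0}$ with $a_{\pi_1},\dots,a_{\pi_j}$ is bracketed with the left-nested bracket of $Da_{\pi_{j+1}}$ with $a_{\pi_{j+2}},\dots,a_{\pi_{j+k+1}}$, and the result is then successively bracketed on the right with $a_{\pi_{j+k+2}},\dots,a_{\pi_n}$; here $(-1)^\varepsilon$ is the Koszul sign of the action of $\pi$ on $a_0\otimes\dots\otimes a_n$. Then $Z_{n,j,k}=Z_{n,k,j}$, and if $j+k+1<n$, then $Z_{n,j,k}=Z_{n,j+1,k}+Z_{n,j,k+1}$.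
   Context: A differential graded Lie algebra: $\mathbb{Z}$-graded vector space $L=\bigoplus_iL_i$ with graded antisymmetric bracket of degree $0$ satisfying the graded Jacobi identity and a square-zero derivation $\delta:L_i\to L_{i-1}$. *)

theory Defs
  imports "HOL-Combinatorics.Permutations"
begin

definition sgn_act :: "int \<Rightarrow> 'v::ab_group_add \<Rightarrow> 'v" where
  "sgn_act e v = (if even e then v else - v)"

definition graded_vs :: "('k::field \<Rightarrow> 'v::ab_group_add \<Rightarrow> 'v) \<Rightarrow> (int \<Rightarrow> 'v set) \<Rightarrow> bool" where
  "graded_vs scale Lg \<longleftrightarrow>
     (\<forall>c v w. scale c (v + w) = scale c v + scale c w) \<and>
     (\<forall>c e v. scale (c + e) v = scale c v + scale e v) \<and>
     (\<forall>c e v. scale (c * e) v = scale c (scale e v)) \<and>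
     (\<forall>v. scale 1 v = v) \<and>
     (\<forall>i. 0 \<in> Lg i \<and> (\<forall>v\<in>Lg i. \<forall>w\<in>Lg i. v + w \<in> Lg i) \<and> (\<forall>c. \<forall>v\<in>Lg i. scale c v \<in> Lg i)) \<and>
     (\<forall>v. \<exists>!f :: int \<Rightarrow> 'v. finite {i. f i \<noteq> 0} \<and> (\<forall>i. f i \<in> Lg i) \<and> v = sum f {i. f i \<noteq> 0})"

definition proj :: "(int \<Rightarrow> 'v::ab_group_add set) \<Rightarrow> int \<Rightarrow> 'v \<Rightarrow> 'v" where
  "proj Lg i v = (THE f :: int \<Rightarrow> 'v. finite {i. f i \<noteq> 0} \<and> (\<forall>i. f i \<in> Lg i) \<and> v = sum f {i. f i \<noteq> 0}) i"

definition dgla :: "('k::field \<Rightarrow> 'v::ab_group_add \<Rightarrow> 'v) \<Rightarrow> (int \<Rightarrow> 'v set)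
                    \<Rightarrow> ('v \<Rightarrow> 'v \<Rightarrow> 'v) \<Rightarrow> ('v \<Rightarrow> 'v) \<Rightarrow> bool" where
  "dgla scale Lg br d \<longleftrightarrow>
     graded_vs scale Lg \<and>
     \<comment> \<open>bilinear bracket of degree 0\<close>
     (\<forall>x y z. br (x + y) z = br x z + br y z) \<and>
     (\<forall>x y z. br x (y + z) = br x y + br x z) \<and>
     (\<forall>c x y. br (scale c x) y = scale c (br x y)) \<and>
     (\<forall>c x y. br x (scale c y) = scale c (br x y)) \<and>
     (\<forall>i j. \<forall>x\<in>Lg i. \<forall>y\<in>Lg j. br x y \<in> Lg (i + j)) \<and>
     \<comment> \<open>graded antisymmetry\<close>
     (\<forall>i j. \<forall>x\<in>Lg i. \<forall>y\<in>Lg j. br x y = - sgn_act (i * j) (br y x)) \<and>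
     \<comment> \<open>graded Jacobi identity\<close>
     (\<forall>i j l. \<forall>x\<in>Lg i. \<forall>y\<in>Lg j. \<forall>z\<in>Lg l.
         br x (br y z) = br (br x y) z + sgn_act (i * j) (br y (br x z))) \<and>
     \<comment> \<open>linear square-zero derivation of degree -1\<close>
     (\<forall>x y. d (x + y) = d x + d y) \<and>
     (\<forall>c x. d (scale c x) = scale c (d x)) \<and>
     (\<forall>i. \<forall>x\<in>Lg i. d x \<in> Lg (i - 1)) \<and>
     (\<forall>x. d (d x) = 0) \<and>
     (\<forall>i. \<forall>x\<in>Lg i. \<forall>y. d (br x y) = br (d x) y + sgn_act i (br x (d y)))"

definition Dop :: "(int \<Rightarrow> 'v::ab_group_add set) \<Rightarrow> ('v \<Rightarrow> 'v) \<Rightarrow> 'v \<Rightarrow> 'v" where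
  "Dop Lg d v = d (proj Lg 1 v)"

text \<open>Exponent of the Koszul sign of the permutation p acting on a_0 \<otimes> ... \<otimes> a_n,
  giving a_{p 0} \<otimes> ... \<otimes> a_{p n}: each pair of positions r < s with p r > p s
  contributes |a_{p r}| |a_{p s}|.\<close>
definition koszul_exp :: "(nat \<Rightarrow> int) \<Rightarrow> nat \<Rightarrow> (nat \<Rightarrow> nat) \<Rightarrow> int" where
  "koszul_exp deg n p =
     (\<Sum>(r, s)\<in>{(r, s). r < s \<and> s \<le> n \<and> p s < p r}. deg (p r) * deg (p s))"

definition lnest :: "('v \<Rightarrow> 'v \<Rightarrow> 'v) \<Rightarrow> 'v \<Rightarrow> 'v list \<Rightarrow> 'v" where
  "lnest br x bs = foldl br x bs"

definition Zterm :: "(int \<Rightarrow> 'v::ab_group_add set) \<Rightarrow> ('v \<Rightarrow> 'v \<Rightarrow> 'v) \<Rightarrow> ('v \<Rightarrow> 'v)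
                     \<Rightarrow> (nat \<Rightarrow> 'v) \<Rightarrow> (nat \<Rightarrow> int) \<Rightarrow> nat \<Rightarrow> nat \<Rightarrow> nat \<Rightarrow> 'v" where
  "Zterm Lg br d a deg n j k =
     (\<Sum>p\<in>{p. p permutes {0..n}}.
        sgn_act (koszul_exp deg n p + (\<Sum>i\<in>{1..j}. deg (p i)))
          (lnest br
             (br (lnest br (Dop Lg d (a (p 0))) (map (\<lambda>i. a (p i)) [1..<j+1]))
                 (lnest br (Dop Lg d (a (p (j+1)))) (map (\<lambda>i. a (p i)) [j+2..<j+k+2])))
             (map (\<lambda>i. a (p i)) [j+k+2..<n+1])))"

end

theory Submission
  imports Defs
begin

text \<open>
  Both identities are proved summand by summand after reindexing the sum over permutations.
  A summand vanishes unless the letters hit by D have degree 1, and then D makes them degree 0,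
  so the two chains X = [...[D a_{p 0}, a_{p 1}], ..., a_{p j}] and
  Y = [...[D a_{p (j+1)}, ...], a_{p (j+k+1)}] have the degrees of their undifferentiated letters.
  For the symmetry, precomposing p with the permutation exchanging the two blocks of positions
  turns the summand of Z_{n,k,j} into the one of Z_{n,j,k} with [Y, X] in place of [X, Y];
  graded antisymmetry and the Koszul sign of the block exchange produce the same sign.
  For the recursion, the next letter c = a_{p (j+k+2)} is moved inside by the Jacobi identity,
  [[X, Y], c] = [X, [Y, c]] + (-1)^{|Y||c|} [[X, c], Y]: the first term is a summand of
  Z_{n,j,k+1}, the second, after moving position j+k+2 to position j+1, one of Z_{n,j+1,k}.
  The Koszul signs are compared through the cocycle identity
  koszul(p o q) = koszul(p) + koszul_{deg o p}(q) modulo 2.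
\<close>

lemma sgn_act_add: "sgn_act (e + e') v = sgn_act e (sgn_act e' v)"
  unfolding sgn_act_def by auto

lemma sgn_act_cong_even: "even (e - e') \<Longrightarrow> sgn_act e v = sgn_act e' v"
  unfolding sgn_act_def by (metis even_add diff_add_cancel)

lemma sgn_act_minus: "sgn_act e (- v) = - sgn_act e v"
  unfolding sgn_act_def by auto

lemma sgn_act_plus: "sgn_act e (v + w) = sgn_act e v + sgn_act e w"
  unfolding sgn_act_def by auto

lemma sgn_act_zero [simp]: "sgn_act e 0 = 0"
  unfolding sgn_act_def by auto

lemma uminus_eq_sgn_act_1: "- v = sgn_act 1 v"
  unfolding sgn_act_def by simp

definition index_pairs :: "nat \<Rightarrow> (nat \<times> nat) set" where
  "index_pairs n = {(r, s). r < s \<and> s \<le> n}"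

lemma finite_index_pairs: "finite (index_pairs n)"
  by (rule finite_subset[of _ "{0..n} \<times> {0..n}"]) (auto simp: index_pairs_def)

lemma koszul_exp_inversions:
  "koszul_exp deg n p =
     (\<Sum>(r, s)\<in>{x \<in> index_pairs n. p (snd x) < p (fst x)}. deg (p r) * deg (p s))"
proof -
  have "{(r, s). r < s \<and> s \<le> n \<and> p s < p r} = {x \<in> index_pairs n. p (snd x) < p (fst x)}"
    by (auto simp: index_pairs_def)
  then show ?thesis by (simp add: koszul_exp_def)
qed

lemma koszul_exp_if:
  "koszul_exp deg n p =
     (\<Sum>x\<in>index_pairs n. if p (snd x) < p (fst x) then deg (p (fst x)) * deg (p (snd x)) else 0)"
  unfolding koszul_exp_inversions
  by (simp add: sum.inter_filter[OF finite_index_pairs] case_prod_beta)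

lemma permutes_sorted_pair_bij:
  assumes q: "q permutes {0..n}"
  shows "bij_betw (\<lambda>(r, s). (min (q r) (q s), max (q r) (q s))) (index_pairs n) (index_pairs n)"
proof -
  let ?\<phi> = "\<lambda>(r, s). (min (q r) (q s), max (q r) (q s))"
  have q_inj: "inj q" and q_le: "\<And>r. r \<le> n \<Longrightarrow> q r \<le> n"
    using permutes_inj[OF q] permutes_in_image[OF q] by auto
  have into: "?\<phi> ` index_pairs n \<subseteq> index_pairs n"
  proof
    fix y assume "y \<in> ?\<phi> ` index_pairs n"
    then obtain r s where rs: "r < s" "s \<le> n" and y: "y = ?\<phi> (r, s)"
      by (auto simp: index_pairs_def)
    then have "q r \<noteq> q s" "q r \<le> n" "q s \<le> n"
      using q_le injD[OF q_inj] by auto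
    then show "y \<in> index_pairs n" by (auto simp: y index_pairs_def)
  qed
  have "inj_on ?\<phi> (index_pairs n)"
  proof (rule inj_onI, clarsimp simp: index_pairs_def)
    fix r s r' s' assume rs: "r < s" "r' < s'"
      and eq: "min (q r) (q s) = min (q r') (q s')" "max (q r) (q s) = max (q r') (q s')"
    have sorted: "q ` {u, v} = {min (q u) (q v), max (q u) (q v)}" for u v
      by (cases "q u \<le> q v") (auto simp: min_def max_def)
    have "q ` {r, s} = q ` {r', s'}"
      unfolding sorted eq ..
    then have "{r, s} = {r', s'}"
      by (simp only: inj_image_eq_iff[OF q_inj])
    then show "r = r' \<and> s = s'"
      using rs by (auto simp: doubleton_eq_iff)
  qed
  then show ?thesis
    using endo_inj_surj[OF finite_index_pairs into] by (simp add: bij_betw_def)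
qed

text \<open>An inversion of \<open>p \<circ> q\<close> at positions \<open>r < s\<close> is an inversion of \<open>q\<close> at \<open>(r, s)\<close>
  or of \<open>p\<close> at the sorted pair of \<open>q r, q s\<close>, and the pairs of the second kind are matched
  bijectively with the inversions of \<open>p\<close>; the terms counted twice cancel modulo 2.\<close>
lemma koszul_exp_comp_even:
  assumes p: "p permutes {0..n}" and q: "q permutes {0..n}"
  shows "even (koszul_exp deg n (p \<circ> q) - koszul_exp deg n p - koszul_exp (deg \<circ> p) n q)"
proof -
  define inv_pq where "inv_pq x = (if p (q (snd x)) < p (q (fst x))
    then deg (p (q (fst x))) * deg (p (q (snd x))) else 0)" for x
  define inv_p where "inv_p x = (if p (snd x) < p (fst x)
    then deg (p (fst x)) * deg (p (snd x)) else 0)" for x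
  define inv_q where "inv_q x = (if q (snd x) < q (fst x)
    then deg (p (q (fst x))) * deg (p (q (snd x))) else 0)" for x
  define \<phi> where "\<phi> = (\<lambda>(r, s). (min (q r) (q s), max (q r) (q s)))"
  have "koszul_exp deg n p = sum inv_p (index_pairs n)"
    unfolding koszul_exp_if inv_p_def ..
  also have "\<dots> = (\<Sum>x\<in>index_pairs n. inv_p (\<phi> x))"
    using sum.reindex_bij_betw[OF permutes_sorted_pair_bij[OF q, folded \<phi>_def]] by (rule sym)
  moreover have "koszul_exp deg n (p \<circ> q) = sum inv_pq (index_pairs n)"
    and "koszul_exp (deg \<circ> p) n q = sum inv_q (index_pairs n)"
    unfolding koszul_exp_if comp_apply inv_pq_def inv_q_def by (rule refl)+
  ultimately have "koszul_exp deg n (p \<circ> q) - koszul_exp deg n p - koszul_exp (deg \<circ> p) n q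
      = (\<Sum>x\<in>index_pairs n. inv_pq x - inv_p (\<phi> x) - inv_q x)"
    by (simp add: sum_subtractf)
  also have "even \<dots>"
  proof (rule dvd_sum, clarify)
    fix r s assume "(r, s) \<in> index_pairs n"
    then have "q r \<noteq> q s" "p (q r) \<noteq> p (q s)"
      using permutes_inj[OF p] permutes_inj[OF q] by (auto simp: index_pairs_def dest: injD)
    then show "even (inv_pq (r, s) - inv_p (\<phi> (r, s)) - inv_q (r, s))"
      by (cases "q r < q s"; cases "p (q r) < p (q s)") (simp_all add: inv_pq_def inv_p_def inv_q_def \<phi>_def mult.commute)
  qed
  finally show ?thesis .
qed

text \<open>\<open>p \<circ> block_swap s b c\<close> lists the entries of \<open>p\<close> at positions \<open>s + b ..< s + b + c\<close>
  before those at positions \<open>s ..< s + b\<close>.\<close>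
definition block_swap :: "nat \<Rightarrow> nat \<Rightarrow> nat \<Rightarrow> nat \<Rightarrow> nat" where
  "block_swap s b c i =
     (if s \<le> i \<and> i < s + c then i + b else if s + c \<le> i \<and> i < s + c + b then i - c else i)"

lemma block_swap_inverse: "block_swap s c b (block_swap s b c i) = i"
  by (auto simp: block_swap_def)

lemma block_swap_permutes:
  assumes "s + b + c \<le> Suc n"
  shows "block_swap s b c permutes {0..n}"
proof (rule bij_imp_permutes)
  show "bij_betw (block_swap s b c) {0..n} {0..n}"
    by (rule bij_betw_byWitness[where f' = "block_swap s c b"])
      (use assms in \<open>auto simp: block_swap_inverse, auto simp: block_swap_def\<close>)
  show "i \<notin> {0..n} \<Longrightarrow> block_swap s b c i = i" for i
    using assms by (auto simp: block_swap_def)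
qed

lemma block_swap_inversion:
  "r < t \<Longrightarrow> block_swap s b c t < block_swap s b c r \<longleftrightarrow>
     s \<le> r \<and> r < s + c \<and> s + c \<le> t \<and> t < s + c + b"
  unfolding block_swap_def by (simp split: if_split) linarith

lemma koszul_exp_product:
  assumes "{x \<in> index_pairs n. q (snd x) < q (fst x)} = A \<times> B" "finite A" "finite B"
  shows "koszul_exp f n q = (\<Sum>i\<in>A. f (q i)) * (\<Sum>i\<in>B. f (q i))"
  unfolding koszul_exp_inversions assms(1)
  by (simp add: sum_product sum.cartesian_product case_prod_beta)

lemma koszul_exp_block_swap:
  assumes "s + b + c \<le> Suc n"
  shows "koszul_exp f n (block_swap s b c) = (\<Sum>i\<in>{s+b..<s+b+c}. f i) * (\<Sum>i\<in>{s..<s+b}. f i)"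
proof -
  have "{x \<in> index_pairs n. block_swap s b c (snd x) < block_swap s b c (fst x)}
      = {s..<s+c} \<times> {s+c..<s+c+b}"
    using assms by (auto simp: index_pairs_def block_swap_inversion)
  then have "koszul_exp f n (block_swap s b c)
      = (\<Sum>i\<in>{s..<s+c}. f (block_swap s b c i)) * (\<Sum>i\<in>{s+c..<s+c+b}. f (block_swap s b c i))"
    by (rule koszul_exp_product) simp_all
  also have "(\<Sum>i\<in>{s..<s+c}. f (block_swap s b c i)) = (\<Sum>i\<in>{s..<s+c}. f (i + b))"
    by (rule sum.cong) (auto simp: block_swap_def)
  also have "\<dots> = (\<Sum>i\<in>{s+b..<s+b+c}. f i)"
    using sum.shift_bounds_nat_ivl[of f s b "s + c"] by (simp add: add_ac)
  also have "(\<Sum>i\<in>{s+c..<s+c+b}. f (block_swap s b c i)) = (\<Sum>i\<in>{s+c..<s+c+b}. f (i - c))"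
    by (rule sum.cong) (auto simp: block_swap_def)
  also have "\<dots> = (\<Sum>i\<in>{s..<s+b}. f i)"
    using sum.shift_bounds_nat_ivl[of "\<lambda>i. f (i - c)" s c "s + b"] by (simp add: add_ac)
  finally show ?thesis .
qed

lemma koszul_exp_comp_block_swap_even:
  assumes "p permutes {0..n}" "s + b + c \<le> Suc n"
  shows "even (koszul_exp deg n (p \<circ> block_swap s b c) - koszul_exp deg n p
    - (\<Sum>i\<in>{s+b..<s+b+c}. deg (p i)) * (\<Sum>i\<in>{s..<s+b}. deg (p i)))"
  using koszul_exp_comp_even[OF assms(1) block_swap_permutes[OF assms(2)], of deg]
  by (simp add: koszul_exp_block_swap[OF assms(2)])

lemma lnest_Nil [simp]: "lnest br x [] = x"
  by (simp add: lnest_def)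

lemma lnest_Cons: "lnest br x (b # bs) = lnest br (br x b) bs"
  by (simp add: lnest_def)

lemma lnest_snoc: "lnest br x (bs @ [b]) = br (lnest br x bs) b"
  by (simp add: lnest_def)

lemma map_upt_shift:
  assumes "\<And>i. m \<le> i \<Longrightarrow> i < m' \<Longrightarrow> f i = g (i + c)"
  shows "map f [m..<m'] = map g [m + c..<m' + c]"
  by (rule nth_equalityI) (use assms in \<open>auto simp: add.commute add.left_commute\<close>)

lemma graded_vs_zero: "graded_vs scale Lg \<Longrightarrow> 0 \<in> Lg i"
  unfolding graded_vs_def by (elim conjE) (drule spec[of _ i], elim conjE, assumption)

lemma proj_homogeneous:
  assumes graded: "graded_vs scale Lg" and x: "x \<in> Lg m"
  shows "proj Lg i x = (if i = m then x else 0)"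
proof -
  let ?P = "\<lambda>f. finite {i. f i \<noteq> 0} \<and> (\<forall>i. f i \<in> Lg i) \<and> x = sum f {i. f i \<noteq> 0}"
  define f where "f i = (if i = m then x else 0)" for i
  have "\<forall>i. f i \<in> Lg i"
    using x graded_vs_zero[OF graded] by (simp add: f_def)
  moreover have "{i. f i \<noteq> 0} = (if x = 0 then {} else {m})"
    by (auto simp: f_def)
  ultimately have "?P f"
    by (simp add: f_def)
  moreover have "\<exists>!f. ?P f"
    using graded unfolding graded_vs_def by (elim conjE) (rule spec)
  ultimately have "(THE f. ?P f) = f"
    by (rule the1_equality[rotated])
  then show ?thesis
    by (simp add: proj_def f_def)
qed

definition Dchain :: "(int \<Rightarrow> 'v::ab_group_add set) \<Rightarrow> ('v \<Rightarrow> 'v \<Rightarrow> 'v) \<Rightarrow> ('v \<Rightarrow> 'v)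
    \<Rightarrow> (nat \<Rightarrow> 'v) \<Rightarrow> (nat \<Rightarrow> nat) \<Rightarrow> nat \<Rightarrow> nat \<Rightarrow> 'v" where
  "Dchain Lg br d a p s t = lnest br (Dop Lg d (a (p s))) (map (\<lambda>i. a (p i)) [Suc s..<t])"

lemma Dchain_Suc:
  "s < t \<Longrightarrow> Dchain Lg br d a p s (Suc t) = br (Dchain Lg br d a p s t) (a (p t))"
  by (simp add: Dchain_def lnest_snoc)

lemma Dchain_shift:
  assumes "s < t" and "\<And>i. s \<le> i \<Longrightarrow> i < t \<Longrightarrow> q i = p (i + c)"
  shows "Dchain Lg br d a q s t = Dchain Lg br d a p (s + c) (t + c)"
  using assms map_upt_shift[of "Suc s" t "\<lambda>i. a (q i)" "\<lambda>i. a (p i)" c]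
  by (simp add: Dchain_def)

definition Z_summand :: "(int \<Rightarrow> 'v::ab_group_add set) \<Rightarrow> ('v \<Rightarrow> 'v \<Rightarrow> 'v) \<Rightarrow> ('v \<Rightarrow> 'v)
    \<Rightarrow> (nat \<Rightarrow> 'v) \<Rightarrow> (nat \<Rightarrow> int) \<Rightarrow> nat \<Rightarrow> nat \<Rightarrow> nat \<Rightarrow> (nat \<Rightarrow> nat) \<Rightarrow> 'v" where
  "Z_summand Lg br d a deg n j k p =
     sgn_act (koszul_exp deg n p + (\<Sum>i\<in>{1..j}. deg (p i)))
       (lnest br (br (Dchain Lg br d a p 0 (j + 1)) (Dchain Lg br d a p (j + 1) (j + k + 2)))
          (map (\<lambda>i. a (p i)) [j + k + 2..<n + 1]))"

lemma Zterm_eq_sum_Z_summand: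
  "Zterm Lg br d a deg n j k = (\<Sum>p | p permutes {0..n}. Z_summand Lg br d a deg n j k p)"
  by (simp add: Zterm_def Z_summand_def Dchain_def)

lemma Z_summand_comp_block_swap_unfold:
  "Z_summand Lg br d a deg n k j (p \<circ> block_swap 0 (j + 1) (k + 1))
     = sgn_act (koszul_exp deg n (p \<circ> block_swap 0 (j + 1) (k + 1))
                  + (\<Sum>i\<in>{j + 2..<j + k + 2}. deg (p i)))
         (lnest br (br (Dchain Lg br d a p (j + 1) (j + k + 2)) (Dchain Lg br d a p 0 (j + 1)))
            (map (\<lambda>i. a (p i)) [j + k + 2..<n + 1]))"
proof -
  define q where "q = p \<circ> block_swap 0 (j + 1) (k + 1)"
  have "Dchain Lg br d a q 0 (k + 1) = Dchain Lg br d a p (j + 1) (j + k + 2)"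
    using Dchain_shift[of 0 "k + 1" q p "j + 1" Lg br d a] by (simp add: q_def block_swap_def add_ac)
  moreover have "Dchain Lg br d a q (k + 1) (k + j + 2) = Dchain Lg br d a p 0 (j + 1)"
    using Dchain_shift[of 0 "j + 1" p q "k + 1" Lg br d a] by (simp add: q_def block_swap_def add_ac)
  moreover have "map (\<lambda>i. a (q i)) [k + j + 2..<n + 1] = map (\<lambda>i. a (p i)) [j + k + 2..<n + 1]"
    by (rule map_cong) (auto simp: q_def block_swap_def add.commute)
  moreover have "(\<Sum>i\<in>{1..k}. deg (q i)) = (\<Sum>i\<in>{j + 2..<j + k + 2}. deg (p i))"
    using sum.shift_bounds_nat_ivl[of "\<lambda>i. deg (p i)" 1 "j + 1" "k + 1"]
    by (simp add: q_def block_swap_def atLeastLessThanSuc_atLeastAtMost add_ac)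
  ultimately show ?thesis
    unfolding q_def[symmetric] Z_summand_def by (simp only:)
qed

lemma Z_summand_unfold_next_letter:
  assumes "j + k + 2 \<le> n"
  shows "Z_summand Lg br d a deg n j k p
      = sgn_act (koszul_exp deg n p + (\<Sum>i\<in>{1..j}. deg (p i)))
          (lnest br
             (br (br (Dchain Lg br d a p 0 (j + 1)) (Dchain Lg br d a p (j + 1) (j + k + 2)))
                 (a (p (j + k + 2))))
             (map (\<lambda>i. a (p i)) [Suc (j + k + 2)..<n + 1]))"
    and "Z_summand Lg br d a deg n j (k + 1) p
      = sgn_act (koszul_exp deg n p + (\<Sum>i\<in>{1..j}. deg (p i)))
          (lnest br
             (br (Dchain Lg br d a p 0 (j + 1))
                 (br (Dchain Lg br d a p (j + 1) (j + k + 2)) (a (p (j + k + 2)))))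
             (map (\<lambda>i. a (p i)) [Suc (j + k + 2)..<n + 1]))"
  using Dchain_Suc[of "j + 1" "j + k + 2" Lg br d a p] upt_conv_Cons[of "j + k + 2" "n + 1"] assms
  by (simp_all add: Z_summand_def lnest_Cons add_ac del: upt_Suc)

lemma Z_summand_comp_block_move_unfold:
  "Z_summand Lg br d a deg n (j + 1) k (p \<circ> block_swap (j + 1) (k + 1) 1)
     = sgn_act (koszul_exp deg n (p \<circ> block_swap (j + 1) (k + 1) 1)
                  + ((\<Sum>i\<in>{1..j}. deg (p i)) + deg (p (j + k + 2))))
         (lnest br
            (br (br (Dchain Lg br d a p 0 (j + 1)) (a (p (j + k + 2))))
                (Dchain Lg br d a p (j + 1) (j + k + 2)))
            (map (\<lambda>i. a (p i)) [Suc (j + k + 2)..<n + 1]))"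
proof -
  define q where "q = p \<circ> block_swap (j + 1) (k + 1) 1"
  have "Dchain Lg br d a q 0 (j + 1) = Dchain Lg br d a p 0 (j + 1)"
    using Dchain_shift[of 0 "j + 1" q p 0 Lg br d a] by (simp add: q_def block_swap_def)
  moreover have "q (j + 1) = p (j + k + 2)"
    by (simp add: q_def block_swap_def)
  ultimately have "Dchain Lg br d a q 0 (j + 1 + 1)
      = br (Dchain Lg br d a p 0 (j + 1)) (a (p (j + k + 2)))"
    using Dchain_Suc[of 0 "j + 1" Lg br d a q] by simp
  moreover have "Dchain Lg br d a q (j + 1 + 1) (j + 1 + k + 2) = Dchain Lg br d a p (j + 1) (j + k + 2)"
    using Dchain_shift[of "j + 1" "j + k + 2" p q 1 Lg br d a] by (simp add: q_def block_swap_def add_ac)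
  moreover have "map (\<lambda>i. a (q i)) [j + 1 + k + 2..<n + 1] = map (\<lambda>i. a (p i)) [Suc (j + k + 2)..<n + 1]"
    by (rule map_cong) (auto simp: q_def block_swap_def)
  moreover have "(\<Sum>i\<in>{1..j + 1}. deg (q i)) = (\<Sum>i\<in>{1..j}. deg (p i)) + deg (p (j + k + 2))"
    by (simp add: q_def block_swap_def)
  ultimately show ?thesis
    unfolding q_def[symmetric] Z_summand_def by (simp only:)
qed

lemma sgn_act_koszul_block_exchange:
  assumes "p permutes {0..n}" "j + k < n" "deg (p 0) = 1" "deg (p (j + 1)) = 1"
  defines "x \<equiv> \<Sum>i\<in>{1..j}. deg (p i)" and "y \<equiv> \<Sum>i\<in>{j + 2..<j + k + 2}. deg (p i)"
  shows "sgn_act (koszul_exp deg n (p \<circ> block_swap 0 (j + 1) (k + 1)) + y + (1 + x * y)) v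
       = sgn_act (koszul_exp deg n p + x) v"
proof -
  let ?kq = "koszul_exp deg n (p \<circ> block_swap 0 (j + 1) (k + 1))"
  have "(\<Sum>i\<in>{0 + (j + 1)..<0 + (j + 1) + (k + 1)}. deg (p i)) = 1 + y"
    and "(\<Sum>i\<in>{0..<0 + (j + 1)}. deg (p i)) = 1 + x"
    using assms(3,4) unfolding x_def y_def
    by (simp_all add: sum.atLeast_Suc_lessThan sum.atLeast_Suc_atMost atLeastLessThanSuc_atLeastAtMost)
  then have "even (?kq - koszul_exp deg n p - (1 + y) * (1 + x))"
    using koszul_exp_comp_block_swap_even[OF assms(1), of 0 "j + 1" "k + 1" deg] assms(2) by simp
  moreover have "?kq + y + (1 + x * y) - (koszul_exp deg n p + x)
      = (?kq - koszul_exp deg n p - (1 + y) * (1 + x)) + 2 * (1 + y + x * y)"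
    by (simp add: algebra_simps)
  ultimately show ?thesis
    by (intro sgn_act_cong_even) (simp only: even_add dvd_triv_left simp_thms)
qed

lemma sgn_act_koszul_block_move:
  assumes "p permutes {0..n}" "j + k + 1 < n" "deg (p (j + 1)) = 1"
  defines "y \<equiv> \<Sum>i\<in>{j + 2..<j + k + 2}. deg (p i)" and "z \<equiv> deg (p (j + k + 2))"
  shows "sgn_act (koszul_exp deg n p + x + y * z) v
       = sgn_act (koszul_exp deg n (p \<circ> block_swap (j + 1) (k + 1) 1) + (x + z)) v"
proof -
  let ?kq = "koszul_exp deg n (p \<circ> block_swap (j + 1) (k + 1) 1)"
  have "(\<Sum>i\<in>{j + 1..<j + 1 + (k + 1)}. deg (p i)) = 1 + y"
    using assms(3) unfolding y_def by (subst sum.atLeast_Suc_lessThan) simp_all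
  moreover have "(\<Sum>i\<in>{j + 1 + (k + 1)..<j + 1 + (k + 1) + 1}. deg (p i)) = z"
    unfolding z_def by simp
  ultimately have "even (?kq - koszul_exp deg n p - z * (1 + y))"
    using koszul_exp_comp_block_swap_even[OF assms(1), of "j + 1" "k + 1" 1 deg] assms(2) by simp
  moreover have "koszul_exp deg n p + x + y * z - (?kq + (x + z))
      = - (?kq - koszul_exp deg n p - z * (1 + y)) + 2 * - z"
    by (simp add: algebra_simps)
  ultimately show ?thesis
    by (intro sgn_act_cong_even) (simp only: even_add even_minus dvd_triv_left simp_thms)
qed

locale DGLA =
  fixes scale :: "'k::field \<Rightarrow> 'v::ab_group_add \<Rightarrow> 'v"
    and Lg :: "int \<Rightarrow> 'v set" and br :: "'v \<Rightarrow> 'v \<Rightarrow> 'v" and d :: "'v \<Rightarrow> 'v"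
  assumes dgla: "dgla scale Lg br d"
begin

lemma dgla_clauses:
  shows "graded_vs scale Lg"
    and "\<forall>x y z. br (x + y) z = br x z + br y z"
    and "\<forall>x y z. br x (y + z) = br x y + br x z"
    and "\<forall>i j. \<forall>x\<in>Lg i. \<forall>y\<in>Lg j. br x y \<in> Lg (i + j)"
    and "\<forall>i j. \<forall>x\<in>Lg i. \<forall>y\<in>Lg j. br x y = - sgn_act (i * j) (br y x)"
    and "\<forall>i j l. \<forall>x\<in>Lg i. \<forall>y\<in>Lg j. \<forall>z\<in>Lg l.
           br x (br y z) = br (br x y) z + sgn_act (i * j) (br y (br x z))"
    and "\<forall>x y. d (x + y) = d x + d y"
    and "\<forall>i. \<forall>x\<in>Lg i. d x \<in> Lg (i - 1)"
  by (insert dgla[unfolded dgla_def], elim conjE, assumption)+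

lemmas graded = dgla_clauses(1)
  and br_add_left = dgla_clauses(2)[rule_format]
  and br_add_right = dgla_clauses(3)[rule_format]
  and br_homogeneous = dgla_clauses(4)[rule_format]
  and br_antisym = dgla_clauses(5)[rule_format]
  and br_jacobi = dgla_clauses(6)[rule_format]
  and d_add = dgla_clauses(7)[rule_format]
  and d_homogeneous = dgla_clauses(8)[rule_format]

lemma d_zero: "d 0 = 0"
  using d_add[of 0 0] by simp

lemma br_zero_left [simp]: "br 0 y = 0"
  using br_add_left[of 0 0 y] by simp

lemma br_zero_right [simp]: "br x 0 = 0"
  using br_add_right[of x 0 0] by simp

lemma br_minus_left: "br (- x) y = - br x y"
  using br_add_left[of x "- x" y] by (simp add: minus_unique)

lemma br_sgn_act_left: "br (sgn_act e x) y = sgn_act e (br x y)"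
  by (simp add: sgn_act_def br_minus_left)

lemma lnest_zero [simp]: "lnest br 0 bs = 0"
  by (induction bs rule: rev_induct) (simp_all add: lnest_snoc)

lemma lnest_add: "lnest br (x + y) bs = lnest br x bs + lnest br y bs"
  by (induction bs rule: rev_induct) (simp_all add: lnest_snoc br_add_left)

lemma lnest_sgn_act: "lnest br (sgn_act e x) bs = sgn_act e (lnest br x bs)"
  by (induction bs rule: rev_induct) (simp_all add: lnest_snoc br_sgn_act_left)

lemma lnest_homogeneous:
  assumes "x \<in> Lg m" and "\<And>i. m1 \<le> i \<Longrightarrow> i < m2 \<Longrightarrow> f i \<in> Lg (g i)"
  shows "lnest br x (map f [m1..<m2]) \<in> Lg (m + (\<Sum>i\<in>{m1..<m2}. g i))"
  using assms(2)
proof (induction m2)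
  case (Suc m2)
  show ?case
  proof (cases "m1 \<le> m2")
    case True
    have "lnest br x (map f [m1..<m2]) \<in> Lg (m + (\<Sum>i\<in>{m1..<m2}. g i))"
      using Suc by simp
    from br_homogeneous[OF this Suc.prems[of m2]] True show ?thesis
      by (simp add: lnest_snoc add.assoc)
  qed (use assms(1) in simp)
qed (use assms(1) in simp)

lemma br_swap:
  "x \<in> Lg i \<Longrightarrow> y \<in> Lg j \<Longrightarrow> br y x = sgn_act (1 + i * j) (br x y)"
  using br_antisym[of y j x i] by (simp add: sgn_act_add uminus_eq_sgn_act_1 mult.commute)

lemma br_right_commute:
  assumes "x \<in> Lg i" "y \<in> Lg j" "z \<in> Lg l"
  shows "br (br x y) z = br x (br y z) + sgn_act (j * l) (br (br x z) y)"
proof -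
  have "br (br x y) z = br x (br y z) - sgn_act (i * j) (br y (br x z))"
    using br_jacobi[OF assms] by (simp add: eq_diff_eq)
  also have "br y (br x z) = - sgn_act (j * (i + l)) (br (br x z) y)"
    using br_antisym[OF assms(2) br_homogeneous[OF assms(1,3)]] .
  also have "sgn_act (i * j) (- sgn_act (j * (i + l)) v) = - sgn_act (j * l) v" for v
    unfolding sgn_act_minus sgn_act_add[symmetric]
    by (rule arg_cong[where f = uminus], rule sgn_act_cong_even) (simp add: algebra_simps)
  finally show ?thesis
    by simp
qed

lemma Dop_homogeneous: "x \<in> Lg m \<Longrightarrow> Dop Lg d x = (if m = 1 then d x else 0)"
  by (simp add: Dop_def proj_homogeneous[OF graded] d_zero)

lemma Dop_in_degree_0: "x \<in> Lg m \<Longrightarrow> Dop Lg d x \<in> Lg 0"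
  using d_homogeneous[of x 1] graded_vs_zero[OF graded] by (auto simp: Dop_homogeneous)

context
  fixes a :: "nat \<Rightarrow> 'v" and deg :: "nat \<Rightarrow> int" and n :: nat
  assumes a_homogeneous: "\<forall>i\<le>n. a i \<in> Lg (deg i)"
begin

lemma permuted_homogeneous: "p permutes {0..n} \<Longrightarrow> i \<le> n \<Longrightarrow> a (p i) \<in> Lg (deg (p i))"
  using a_homogeneous permutes_in_image[of p "{0..n}" i] by simp

lemma Dchain_homogeneous:
  assumes "p permutes {0..n}" "s \<le> n" "t \<le> Suc n"
  shows "Dchain Lg br d a p s t \<in> Lg (\<Sum>i\<in>{Suc s..<t}. deg (p i))"
  using lnest_homogeneous[OF Dop_in_degree_0[OF permuted_homogeneous[OF assms(1,2)]],
      of "Suc s" t "\<lambda>i. a (p i)"] permuted_homogeneous[OF assms(1)] assms(3)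
  by (simp add: Dchain_def)

lemma Dchain_nonzero_deg:
  "p permutes {0..n} \<Longrightarrow> s \<le> n \<Longrightarrow> Dchain Lg br d a p s t \<noteq> 0 \<Longrightarrow> deg (p s) = 1"
  using Dop_homogeneous[OF permuted_homogeneous] by (auto simp: Dchain_def split: if_splits)

lemma Z_summand_comp_block_swap:
  assumes p: "p permutes {0..n}" and jk: "j + k < n"
  shows "Z_summand Lg br d a deg n k j (p \<circ> block_swap 0 (j + 1) (k + 1))
       = Z_summand Lg br d a deg n j k p"
proof -
  define q where "q = p \<circ> block_swap 0 (j + 1) (k + 1)"
  define X where "X = Dchain Lg br d a p 0 (j + 1)"
  define Y where "Y = Dchain Lg br d a p (j + 1) (j + k + 2)"
  define R where "R = map (\<lambda>i. a (p i)) [j + k + 2..<n + 1]"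
  define x where "x = (\<Sum>i\<in>{1..j}. deg (p i))"
  define y where "y = (\<Sum>i\<in>{j + 2..<j + k + 2}. deg (p i))"
  have X: "X \<in> Lg x" and Y: "Y \<in> Lg y"
    using Dchain_homogeneous[OF p, of 0 "j + 1"] Dchain_homogeneous[OF p, of "j + 1" "j + k + 2"] jk
    by (simp_all add: X_def Y_def x_def y_def atLeastLessThanSuc_atLeastAtMost)
  have q_summand: "Z_summand Lg br d a deg n k j q = sgn_act (koszul_exp deg n q + y) (lnest br (br Y X) R)"
    unfolding q_def X_def Y_def R_def y_def by (rule Z_summand_comp_block_swap_unfold)
  have p_summand: "Z_summand Lg br d a deg n j k p = sgn_act (koszul_exp deg n p + x) (lnest br (br X Y) R)"
    by (simp add: Z_summand_def X_def Y_def R_def x_def)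
  have "Z_summand Lg br d a deg n k j q = Z_summand Lg br d a deg n j k p"
  proof (cases "X = 0 \<or> Y = 0")
    case True
    then show ?thesis by (auto simp: q_summand p_summand)
  next
    case False
    then have "deg (p 0) = 1" "deg (p (j + 1)) = 1"
      using Dchain_nonzero_deg[OF p] jk by (auto simp: X_def Y_def)
    then have "sgn_act (koszul_exp deg n q + y + (1 + x * y)) v = sgn_act (koszul_exp deg n p + x) v"
      for v :: 'v
      unfolding q_def x_def y_def by (rule sgn_act_koszul_block_exchange[OF p jk])
    then show ?thesis
      by (simp add: q_summand p_summand br_swap[OF X Y] lnest_sgn_act sgn_act_add[symmetric])
  qed
  then show ?thesis
    by (simp only: q_def)
qed

lemma Z_summand_jacobi_split:
  assumes p: "p permutes {0..n}" and jk: "j + k + 1 < n"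
  shows "Z_summand Lg br d a deg n j k p
       = Z_summand Lg br d a deg n j (k + 1) p
         + Z_summand Lg br d a deg n (j + 1) k (p \<circ> block_swap (j + 1) (k + 1) 1)"
proof -
  define q where "q = p \<circ> block_swap (j + 1) (k + 1) 1"
  define X where "X = Dchain Lg br d a p 0 (j + 1)"
  define Y where "Y = Dchain Lg br d a p (j + 1) (j + k + 2)"
  define c where "c = a (p (j + k + 2))"
  define R where "R = map (\<lambda>i. a (p i)) [Suc (j + k + 2)..<n + 1]"
  define x where "x = (\<Sum>i\<in>{1..j}. deg (p i))"
  define y where "y = (\<Sum>i\<in>{j + 2..<j + k + 2}. deg (p i))"
  define z where "z = deg (p (j + k + 2))"
  have X: "X \<in> Lg x" and Y: "Y \<in> Lg y" and c: "c \<in> Lg z"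
    using Dchain_homogeneous[OF p, of 0 "j + 1"] Dchain_homogeneous[OF p, of "j + 1" "j + k + 2"]
      permuted_homogeneous[OF p, of "j + k + 2"] jk
    by (simp_all add: X_def Y_def c_def x_def y_def z_def atLeastLessThanSuc_atLeastAtMost)
  have p_summand: "Z_summand Lg br d a deg n j k p
      = sgn_act (koszul_exp deg n p + x) (lnest br (br (br X Y) c) R)"
    and p_summand': "Z_summand Lg br d a deg n j (k + 1) p
      = sgn_act (koszul_exp deg n p + x) (lnest br (br X (br Y c)) R)"
    unfolding X_def Y_def c_def R_def x_def
    by (rule Z_summand_unfold_next_letter, use jk in simp)+
  have q_summand: "Z_summand Lg br d a deg n (j + 1) k q
      = sgn_act (koszul_exp deg n q + (x + z)) (lnest br (br (br X c) Y) R)"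
    unfolding q_def X_def Y_def c_def R_def x_def z_def by (rule Z_summand_comp_block_move_unfold)
  have "Z_summand Lg br d a deg n j k p
      = Z_summand Lg br d a deg n j (k + 1) p + Z_summand Lg br d a deg n (j + 1) k q"
  proof (cases "Y = 0")
    case True
    then show ?thesis
      unfolding p_summand p_summand' q_summand by simp
  next
    case False
    then have "deg (p (j + 1)) = 1"
      using Dchain_nonzero_deg[OF p] jk by (auto simp: Y_def)
    then have "sgn_act (koszul_exp deg n p + x + y * z) v = sgn_act (koszul_exp deg n q + (x + z)) v"
      for v :: 'v
      unfolding q_def y_def z_def by (rule sgn_act_koszul_block_move[OF p jk])
    then show ?thesis
      unfolding p_summand p_summand' q_summand br_right_commute[OF X Y c] lnest_add lnest_sgn_act
        sgn_act_plus sgn_act_add[symmetric]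
      by (simp add: add.assoc)
  qed
  then show ?thesis
    by (simp only: q_def)
qed

end

end

theorem lemma2:
  fixes scale :: "'k::field \<Rightarrow> 'v::ab_group_add \<Rightarrow> 'v"
    and Lg :: "int \<Rightarrow> 'v set" and br :: "'v \<Rightarrow> 'v \<Rightarrow> 'v" and d :: "'v \<Rightarrow> 'v"
    and a :: "nat \<Rightarrow> 'v" and deg :: "nat \<Rightarrow> int" and n j k :: nat
  assumes "dgla scale Lg br d"
    and "\<forall>i\<le>n. a i \<in> Lg (deg i)"
    and "j + k < n"
  shows "Zterm Lg br d a deg n j k = Zterm Lg br d a deg n k j \<and>
         (j + k + 1 < n \<longrightarrow>
            Zterm Lg br d a deg n j k = Zterm Lg br d a deg n (j+1) k + Zterm Lg br d a deg n j (k+1))"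
proof -
  interpret DGLA scale Lg br d
    by (fact DGLA.intro[OF assms(1)])
  let ?S = "{p. p permutes {0..n}}"
  have "Zterm Lg br d a deg n k j
      = (\<Sum>p\<in>?S. Z_summand Lg br d a deg n k j (p \<circ> block_swap 0 (j + 1) (k + 1)))"
    unfolding Zterm_eq_sum_Z_summand
    by (rule sum_permutations_compose_right) (rule block_swap_permutes, use assms(3) in simp)
  also have "\<dots> = Zterm Lg br d a deg n j k"
    unfolding Zterm_eq_sum_Z_summand
    by (rule sum.cong[OF refl], rule Z_summand_comp_block_swap[OF assms(2) _ assms(3)]) simp
  finally have symmetric: "Zterm Lg br d a deg n j k = Zterm Lg br d a deg n k j" ..
  have recursive: "Zterm Lg br d a deg n j k
      = Zterm Lg br d a deg n (j + 1) k + Zterm Lg br d a deg n j (k + 1)" if jk: "j + k + 1 < n"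
  proof -
    have "Zterm Lg br d a deg n j k = Zterm Lg br d a deg n j (k + 1)
        + (\<Sum>p\<in>?S. Z_summand Lg br d a deg n (j + 1) k (p \<circ> block_swap (j + 1) (k + 1) 1))"
      unfolding Zterm_eq_sum_Z_summand sum.distrib[symmetric]
      by (rule sum.cong[OF refl], rule Z_summand_jacobi_split[OF assms(2) _ jk]) simp
    also have "(\<Sum>p\<in>?S. Z_summand Lg br d a deg n (j + 1) k (p \<circ> block_swap (j + 1) (k + 1) 1))
        = Zterm Lg br d a deg n (j + 1) k"
      unfolding Zterm_eq_sum_Z_summand
      by (rule sum_permutations_compose_right[symmetric]) (rule block_swap_permutes, use jk in simp)
    finally show ?thesis
      by (simp only: add.commute)
  qed
  from symmetric recursive show ?thesis
    by blast
qed

end
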